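(* For $u,v,u',v'\in\mathbb{C}$, the formal deformations $(\llbracket\cdot,\cdot\rrbracket^{u,v}_n)_{n\ge0}$ and $(\llbracket\cdot,\cdot\rrbracket^{u',v'}_n)_{n\ge0}$ of $\mathcal K$ are modular-isomorphic if and only if $(u,v)=(u',v')$.
   Context: Let $\mathcal K=\mathbb{C}[E_4,E_6,A,A^{-1},B]$ be the localization at $A$ of the polynomial algebra $\mathbb{C}[E_4,E_6,A,B]$ in algebraically independent variables, bigraded by weight and index ($E_4$: $(4,0)$, $E_6$: $(6,0)$, $A$: $(-2,1)$, $B$: $(0,1)$), with components $\mathcal K_{k,p}$. Set $F_2=BA^{-1}$. For $u\in\mathbb{C}$, $\partial_u$ is the derivation of $\mathcal K$ with $\partial_u(E_4)=-\frac13(E_6-E_4F_2)$, $\partial_u(E_6)=-\frac12(E_4^2-E_6F_2)$, $\partial_u(F_2)=-\frac1{12}(E_4-F_2^2)$, $\partial_u(A)=uB$. For $f\in\mathcal K_{k,p}$, $g\in\mathcal K_{\ell,q}$: $\llbracket f,g\rrbracket^{u,v}_n=\sum_{r=0}^n(-1)^r\binom{k+vp+n-1}{n-r}\binom{\ell+vq+n-1}{r}\partial_u^r(f)\partial_u^{n-r}(g)$, extended bilinearly; these are formal deformations of $\mathcal K$. Two formal deformations $(\mu_n)_n$, $(\nu_n)_n$ of $\mathcal K$ are modular-isomorphic if there is a $\mathbb{C}$-linear bijection $\phi:\mathcal K\to\mathcal K$ mapping each $\mathcal K_{k,p}$ into $\mathcal K_{k,p}$ with $\phi(\mu_n(f,g))=\nu_n(\phi(f),\phi(g))$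 for all $n\ge0$, $f,g\in\mathcal K$. *)

theory Defs
  imports Complex_Main "HOL-Library.Poly_Mapping" "HOL-Library.Product_Plus"
begin

text \<open>Monomials E4^a E6^b A^c B^d are encoded by exponent vectors (a,b,c,d),
  with c an integer (localisation at A). The algebra K is the monoid algebra
  of these exponents over the complex numbers.\<close>

type_synonym mono = "nat \<times> nat \<times> int \<times> nat"
type_synonym K = "mono \<Rightarrow>\<^sub>0 complex"

definition wt :: "mono \<Rightarrow> int" where
  "wt m = (case m of (a,b,c,d) \<Rightarrow> 4 * int a + 6 * int b - 2 * c)"

definition ind :: "mono \<Rightarrow> int" where
  "ind m = (case m of (a,b,c,d) \<Rightarrow> c + int d)"

definition cst :: "complex \<Rightarrow> K" where
  "cst c = Poly_Mapping.single 0 c"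

definition E4 :: K where "E4 = Poly_Mapping.single (1,0,0,0) 1"
definition E6 :: K where "E6 = Poly_Mapping.single (0,1,0,0) 1"
definition A :: K where "A = Poly_Mapping.single (0,0,1,0) 1"
definition Ainv :: K where "Ainv = Poly_Mapping.single (0,0,-1,0) 1"
definition B :: K where "B = Poly_Mapping.single (0,0,0,1) 1"
definition F2 :: K where "F2 = B * Ainv"

definition Kc :: "int \<Rightarrow> int \<Rightarrow> K set" where
  "Kc k p = {f. \<forall>m \<in> Poly_Mapping.keys f. wt m = k \<and> ind m = p}"

definition hcomp :: "int \<Rightarrow> int \<Rightarrow> K \<Rightarrow> K" where
  "hcomp k p f = (\<Sum>m \<in> {m \<in> Poly_Mapping.keys f. wt m = k \<and> ind m = p}. Poly_Mapping.single m (Poly_Mapping.lookup f m))"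

definition degs :: "K \<Rightarrow> (int \<times> int) set" where
  "degs f = (\<lambda>m. (wt m, ind m)) ` Poly_Mapping.keys f"

definition is_derivation :: "(K \<Rightarrow> K) \<Rightarrow> bool" where
  "is_derivation D \<longleftrightarrow> (\<forall>f g. D (f + g) = D f + D g) \<and> (\<forall>f g. D (f * g) = f * D g + g * D f)
     \<and> (\<forall>c. D (cst c) = 0)"

definition dU :: "complex \<Rightarrow> K \<Rightarrow> K" where
  "dU u = (THE D. is_derivation D
      \<and> D E4 = - cst (1/3) * (E6 - E4 * F2)
      \<and> D E6 = - cst (1/2) * (E4^2 - E6 * F2)
      \<and> D F2 = - cst (1/12) * (E4 - F2^2)
      \<and> D A = cst u * B)"

definition brh :: "complex \<Rightarrow> complex \<Rightarrow> nat \<Rightarrow> int \<Rightarrow> int \<Rightarrow> int \<Rightarrow> int \<Rightarrow> K \<Rightarrow> K \<Rightarrow> K" where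
  "brh u v n k p l q f g = (\<Sum>r=0..n. cst ((-1)^r
       * ((of_int k + v * of_int p + of_nat n - 1) gchoose (n - r))
       * ((of_int l + v * of_int q + of_nat n - 1) gchoose r))
       * ((dU u ^^ r) f) * ((dU u ^^ (n - r)) g))"

definition br :: "complex \<Rightarrow> complex \<Rightarrow> nat \<Rightarrow> K \<Rightarrow> K \<Rightarrow> K" where
  "br u v n f g = (\<Sum>(k,p) \<in> degs f. \<Sum>(l,q) \<in> degs g.
       brh u v n k p l q (hcomp k p f) (hcomp l q g))"

definition modular_iso :: "(nat \<Rightarrow> K \<Rightarrow> K \<Rightarrow> K) \<Rightarrow> (nat \<Rightarrow> K \<Rightarrow> K \<Rightarrow> K) \<Rightarrow> bool" where
  "modular_iso \<mu> \<nu> \<longleftrightarrow> (\<exists>\<phi>. bij \<phi>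
      \<and> (\<forall>f g. \<phi> (f + g) = \<phi> f + \<phi> g) \<and> (\<forall>c f. \<phi> (cst c * f) = cst c * \<phi> f)
      \<and> (\<forall>k p f. f \<in> Kc k p \<longrightarrow> \<phi> f \<in> Kc k p)
      \<and> (\<forall>n f g. \<phi> (\<mu> n f g) = \<nu> n (\<phi> f) (\<phi> g)))"

end

theory Submission
  imports Defs
begin

text \<open>
  An isomorphism \<phi> of the two deformations preserves every graded piece K_{k,p}, and since the
  degree-0 bracket is the product, \<phi> is an algebra automorphism fixing the constants. The pieces
  K_{-2,1}, K_{2,0}, K_{4,0}, K_{6,0} are spanned by A; F2; E4, F2^2; E6, E4 F2, F2^3, so \<phi> is
  described on the generators by seven scalars. Comparing coefficients of the first brackets
  [F2,E4]_1, [F2,E6]_1, [F2,A]_1 and [A,E4]_1 with those of their images forces \<phi> to fix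
  E4 and F2, and then v = v' and u = u'. To compute these brackets, \<partial>_u, which is specified only
  on generators, is realised as the linear extension of its chain-rule values on monomials.
\<close>

definition mon :: "mono \<Rightarrow> K" where
  "mon m = Poly_Mapping.single m 1"

lemma zero_mono: "(0::mono) = (0,0,0,0)"
  by (simp add: zero_prod_def)

lemma mon_mult: "mon m * mon n = mon (m + n)"
  by (simp add: mon_def mult_single)

lemma mon_zero: "mon (0,0,0,0) = 1"
  by (simp add: mon_def flip: zero_mono)

lemma mon_nonzero: "mon m \<noteq> 0"
  by (metis mon_def lookup_single_eq lookup_zero one_neq_zero)

lemma cst_mult_single: "cst c * Poly_Mapping.single m d = Poly_Mapping.single m (c * d)"
  by (simp add: cst_def mult_single)

lemma cst_mult_mon: "cst c * mon m = Poly_Mapping.single m c"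
  by (simp add: mon_def cst_mult_single)

lemma cst_add: "cst (a + b) = cst a + cst b"
  by (simp add: cst_def single_add)

lemma cst_mult: "cst (a * b) = cst a * cst b"
  by (simp add: cst_def mult_single)

lemma cst_uminus: "cst (- a) = - cst a"
  by (simp add: cst_def single_uminus)

lemma cst_0 [simp]: "cst 0 = 0"
  and cst_1 [simp]: "cst 1 = 1"
  and cst_numeral [simp]: "cst (numeral k) = numeral k"
  by (simp_all add: cst_def)

lemma cst_power: "cst (a ^ n) = cst a ^ n"
  by (induction n) (simp_all add: cst_mult)

lemma cst_eq_iff [simp]: "cst a = cst b \<longleftrightarrow> a = b"
  by (metis cst_def lookup_single_eq)

lemma numeral_mult_single:
    "numeral k * Poly_Mapping.single m c = Poly_Mapping.single m (numeral k * c)"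
  and single_mult_numeral:
    "Poly_Mapping.single m c * numeral k = Poly_Mapping.single m (c * numeral k)"
  by (metis mult_single single_numeral add_0, metis mult_single single_numeral add_0_right)

lemma poly_mapping_sum_singles:
  "f = (\<Sum>m\<in>Poly_Mapping.keys f. Poly_Mapping.single m (Poly_Mapping.lookup f m))"
proof (rule poly_mapping_eqI)
  fix k
  show "Poly_Mapping.lookup f k
    = Poly_Mapping.lookup (\<Sum>m\<in>Poly_Mapping.keys f. Poly_Mapping.single m (Poly_Mapping.lookup f m)) k"
    by (cases "k \<in> Poly_Mapping.keys f") (auto simp: lookup_sum lookup_single when_def in_keys_iff)
qed

abbreviation coeff :: "K \<Rightarrow> mono \<Rightarrow> complex" where
  "coeff f \<equiv> Poly_Mapping.lookup f"

abbreviation supp :: "K \<Rightarrow> mono set" where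
  "supp f \<equiv> Poly_Mapping.keys f"

lemma K_sum_monomials: "f = (\<Sum>m\<in>supp f. cst (coeff f m) * mon m)"
  by (simp add: cst_mult_mon flip: poly_mapping_sum_singles)

definition lin_ext :: "(mono \<Rightarrow> K) \<Rightarrow> K \<Rightarrow> K" where
  "lin_ext h f = (\<Sum>m\<in>supp f. cst (coeff f m) * h m)"

lemma lin_ext_superset:
  assumes "finite S" "supp f \<subseteq> S"
  shows "lin_ext h f = (\<Sum>m\<in>S. cst (coeff f m) * h m)"
  unfolding lin_ext_def
  by (rule sum.mono_neutral_left) (use assms in \<open>auto simp: in_keys_iff\<close>)

lemma lin_ext_add: "lin_ext h (f + g) = lin_ext h f + lin_ext h g"
proof -
  let ?S = "supp f \<union> supp g"
  have "lin_ext h (f + g) = (\<Sum>m\<in>?S. cst (coeff (f + g) m) * h m)"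
    by (rule lin_ext_superset) (auto simp: keys_add)
  also have "\<dots> = (\<Sum>m\<in>?S. cst (coeff f m) * h m)
                 + (\<Sum>m\<in>?S. cst (coeff g m) * h m)"
    by (simp add: lookup_add cst_add distrib_right sum.distrib)
  also have "\<dots> = lin_ext h f + lin_ext h g"
    using lin_ext_superset[of ?S f h] lin_ext_superset[of ?S g h] by simp
  finally show ?thesis .
qed

lemma lin_ext_single: "lin_ext h (Poly_Mapping.single m c) = cst c * h m"
  by (cases "c = 0") (auto simp: lin_ext_def)

lemma lin_ext_sum: "finite S \<Longrightarrow> lin_ext h (\<Sum>i\<in>S. F i) = (\<Sum>i\<in>S. lin_ext h (F i))"
  by (induction S rule: finite_induct) (simp_all add: lin_ext_add, simp add: lin_ext_def)

lemma is_derivation_lin_ext: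
  assumes leibniz: "\<And>m n. h (m + n) = mon m * h n + mon n * h m"
  shows "is_derivation (lin_ext h)"
  unfolding is_derivation_def
proof (intro conjI allI)
  fix f g
  show "lin_ext h (f + g) = lin_ext h f + lin_ext h g"
    by (rule lin_ext_add)
  let ?F = "supp f" and ?G = "supp g"
  let ?f = "coeff f" and ?g = "coeff g"
  have "f * g = (\<Sum>m\<in>?F. \<Sum>n\<in>?G. Poly_Mapping.single (m + n) (?f m * ?g n))"
    by (subst poly_mapping_sum_singles[of f], subst poly_mapping_sum_singles[of g])
      (simp add: sum_product mult_single)
  then have "lin_ext h (f * g) = (\<Sum>m\<in>?F. \<Sum>n\<in>?G. cst (?f m * ?g n) * h (m + n))"
    by (simp add: lin_ext_sum lin_ext_single)
  also have "\<dots> = (\<Sum>m\<in>?F. cst (?f m) * mon m) * (\<Sum>n\<in>?G. cst (?g n) * h n)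
                 + (\<Sum>n\<in>?G. cst (?g n) * mon n) * (\<Sum>m\<in>?F. cst (?f m) * h m)"
    by (simp add: leibniz cst_mult sum_product algebra_simps sum.distrib sum.swap[of _ ?G ?F])
  also have "\<dots> = f * lin_ext h g + g * lin_ext h f"
    by (simp add: lin_ext_def flip: K_sum_monomials)
  finally show "lin_ext h (f * g) = f * lin_ext h g + g * lin_ext h f" .
next
  fix c
  have "h 0 = h 0 + h 0"
    using leibniz[of 0 0] by (simp add: zero_mono mon_zero)
  then show "lin_ext h (cst c) = 0"
    by (simp add: cst_def lin_ext_single)
qed

definition pd_E4 :: "mono \<Rightarrow> K" where
  "pd_E4 m = (case m of (a, b, c, d) \<Rightarrow> cst (of_nat a) * mon (a - 1, b, c, d))"
definition pd_E6 :: "mono \<Rightarrow> K" where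
  "pd_E6 m = (case m of (a, b, c, d) \<Rightarrow> cst (of_nat b) * mon (a, b - 1, c, d))"
definition pd_A :: "mono \<Rightarrow> K" where
  "pd_A m = (case m of (a, b, c, d) \<Rightarrow> cst (of_int c) * mon (a, b, c - 1, d))"
definition pd_B :: "mono \<Rightarrow> K" where
  "pd_B m = (case m of (a, b, c, d) \<Rightarrow> cst (of_nat d) * mon (a, b, c, d - 1))"

lemma pd_E4_leibniz: "pd_E4 (m + n) = mon m * pd_E4 n + mon n * pd_E4 m"
proof -
  obtain a b c d a' b' c' d' where "m = (a, b, c, d)" "n = (a', b', c', d')"
    by (metis prod_cases4)
  then show ?thesis
    by (cases a; cases a') (simp_all add: pd_E4_def mon_mult cst_add algebra_simps)
qed

lemma pd_E6_leibniz: "pd_E6 (m + n) = mon m * pd_E6 n + mon n * pd_E6 m"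
proof -
  obtain a b c d a' b' c' d' where "m = (a, b, c, d)" "n = (a', b', c', d')"
    by (metis prod_cases4)
  then show ?thesis
    by (cases b; cases b') (simp_all add: pd_E6_def mon_mult cst_add algebra_simps)
qed

lemma pd_A_leibniz: "pd_A (m + n) = mon m * pd_A n + mon n * pd_A m"
proof -
  obtain a b c d a' b' c' d' where "m = (a, b, c, d)" "n = (a', b', c', d')"
    by (metis prod_cases4)
  then show ?thesis
    by (simp add: pd_A_def mon_mult cst_add algebra_simps)
qed

lemma pd_B_leibniz: "pd_B (m + n) = mon m * pd_B n + mon n * pd_B m"
proof -
  obtain a b c d a' b' c' d' where "m = (a, b, c, d)" "n = (a', b', c', d')"
    by (metis prod_cases4)
  then show ?thesis
    by (cases d; cases d') (simp_all add: pd_B_def mon_mult cst_add algebra_simps)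
qed

definition dE4 :: K where "dE4 = - cst (1/3) * (E6 - E4 * F2)"
definition dE6 :: K where "dE6 = - cst (1/2) * (E4^2 - E6 * F2)"
definition dF2 :: K where "dF2 = - cst (1/12) * (E4 - F2^2)"
definition dA :: "complex \<Rightarrow> K" where "dA u = cst u * B"
definition dB :: "complex \<Rightarrow> K" where "dB u = F2 * dA u + A * dF2"
  \<comment> \<open>the value forced on B = F2 A by the Leibniz rule\<close>

definition dU_mon :: "complex \<Rightarrow> mono \<Rightarrow> K" where
  "dU_mon u m = pd_E4 m * dE4 + pd_E6 m * dE6 + pd_A m * dA u + pd_B m * dB u"

lemma dU_mon_leibniz: "dU_mon u (m + n) = mon m * dU_mon u n + mon n * dU_mon u m"
  unfolding dU_mon_def pd_E4_leibniz pd_E6_leibniz pd_A_leibniz pd_B_leibniz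
  by (simp add: algebra_simps)

lemma E4_mon: "E4 = mon (1,0,0,0)"
  and E6_mon: "E6 = mon (0,1,0,0)"
  and A_mon: "A = mon (0,0,1,0)"
  and Ainv_mon: "Ainv = mon (0,0,-1,0)"
  and B_mon: "B = mon (0,0,0,1)"
  by (simp_all add: E4_def E6_def A_def Ainv_def B_def mon_def)

lemma F2_mon: "F2 = mon (0,0,-1,1)"
  by (simp add: F2_def B_mon Ainv_mon mon_mult)

lemma A_mult_Ainv: "A * Ainv = 1"
  by (simp add: A_mon Ainv_mon mon_mult mon_zero)

lemma B_eq_F2_mult_A: "B = F2 * A"
  by (simp add: A_mon B_mon F2_mon mon_mult)

lemma mon_eq_power_product:
  "mon (a,b,c,d) = E4 ^ a * E6 ^ b * (if c \<ge> 0 then A ^ nat c else Ainv ^ nat (- c)) * B ^ d"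
proof -
  have pow: "mon (x1, x2, x3, x4) ^ n = mon (n * x1, n * x2, of_nat n * x3, n * x4)" for n x1 x2 x3 x4
    by (induction n) (simp_all add: mon_zero mon_mult algebra_simps)
  have "mon (a,b,c,d) = mon (a,0,0,0) * mon (0,b,0,0) * mon (0,0,c,0) * mon (0,0,0,d)"
    by (simp add: mon_mult)
  moreover have "mon (0,0,c,0) = (if c \<ge> 0 then A ^ nat c else Ainv ^ nat (- c))"
    using pow[of 0 0 1 0 "nat c"] pow[of 0 0 "-1" 0 "nat (- c)"] by (simp add: A_mon Ainv_mon)
  ultimately show ?thesis
    using pow[of 1 0 0 0 a] pow[of 0 1 0 0 b] pow[of 0 0 0 1 d] by (simp add: E4_mon E6_mon B_mon)
qed

lemma lin_ext_dU_mon_generators: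
  "lin_ext (dU_mon u) E4 = dE4" "lin_ext (dU_mon u) E6 = dE6"
  "lin_ext (dU_mon u) A = dA u" "lin_ext (dU_mon u) F2 = dF2"
proof -
  have mon: "lin_ext (dU_mon u) (mon m) = dU_mon u m" for m
    by (simp add: mon_def lin_ext_single)
  show "lin_ext (dU_mon u) E4 = dE4" "lin_ext (dU_mon u) E6 = dE6" "lin_ext (dU_mon u) A = dA u"
    by (simp_all add: E4_mon E6_mon A_mon mon dU_mon_def pd_E4_def pd_E6_def pd_A_def pd_B_def
        mon_zero)
  have "lin_ext (dU_mon u) F2 = - (mon (0,0,-2,1) * dA u) + mon (0,0,-1,0) * dB u"
    by (simp add: F2_mon mon dU_mon_def pd_E4_def pd_E6_def pd_A_def pd_B_def cst_uminus mon_zero)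
  moreover have "mon (0,0,-1,0) * dB u = mon (0,0,-2,1) * dA u + dF2"
    by (simp add: dB_def F2_mon A_mon distrib_left mon_mult mon_zero flip: mult.assoc)
  ultimately show "lin_ext (dU_mon u) F2 = dF2"
    by simp
qed

context
  fixes D :: "K \<Rightarrow> K"
  assumes D: "is_derivation D"
begin

lemma derivation_add: "D (f + g) = D f + D g"
  and derivation_mult: "D (f * g) = f * D g + g * D f"
  and derivation_cst: "D (cst c) = 0"
  using D by (simp_all add: is_derivation_def)

lemma derivation_zero: "D 0 = 0"
  using derivation_cst[of 0] by simp

lemma derivation_one: "D 1 = 0"
  using derivation_cst[of 1] by simp

lemma derivation_sum: "finite S \<Longrightarrow> D (\<Sum>i\<in>S. F i) = (\<Sum>i\<in>S. D (F i))"
  by (induction S rule: finite_induct) (simp_all add: derivation_zero derivation_add)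

lemma derivation_Ainv: "D Ainv = - (Ainv * Ainv * D A)"
proof -
  have "A * D Ainv + Ainv * D A = 0"
    using derivation_one by (simp flip: derivation_mult add: A_mult_Ainv)
  then have "Ainv * (A * D Ainv + Ainv * D A) = 0"
    by simp
  then have "D Ainv + Ainv * Ainv * D A = 0"
    by (simp add: distrib_left mult.commute[of Ainv A] A_mult_Ainv flip: mult.assoc)
  then show ?thesis
    by (simp add: eq_neg_iff_add_eq_0)
qed

end

lemma derivation_eqI:
  assumes D1: "is_derivation D1" and D2: "is_derivation D2"
    and "D1 E4 = D2 E4" "D1 E6 = D2 E6" "D1 F2 = D2 F2" "D1 A = D2 A"
  shows "D1 = D2"
proof -
  let ?S = "{f. D1 f = D2 f}"
  have mult: "f * g \<in> ?S" if "f \<in> ?S" "g \<in> ?S" for f g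
    using that by (simp add: derivation_mult[OF D1] derivation_mult[OF D2])
  have pow: "f ^ n \<in> ?S" if "f \<in> ?S" for f n
  proof (induction n)
    case 0
    show ?case by (simp add: derivation_one[OF D1] derivation_one[OF D2])
  next
    case (Suc n)
    then show ?case unfolding power_Suc by (rule mult[OF that])
  qed
  have gens: "E4 \<in> ?S" "E6 \<in> ?S" "F2 \<in> ?S" "A \<in> ?S"
    using assms by simp_all
  moreover have "Ainv \<in> ?S"
    using gens by (simp add: derivation_Ainv[OF D1] derivation_Ainv[OF D2])
  moreover have "B \<in> ?S"
    unfolding B_eq_F2_mult_A using gens(3,4) by (rule mult)
  ultimately have "mon m \<in> ?S" for m
    by (cases m rule: prod_cases4)
      (simp only: mon_eq_power_product mult pow simp_thms split: if_split)
  then have "cst (coeff f m) * mon m \<in> ?S" for f m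
    by (simp add: derivation_mult[OF D1] derivation_mult[OF D2]
        derivation_cst[OF D1] derivation_cst[OF D2])
  then have "f \<in> ?S" for f
    by (subst K_sum_monomials, simp add: derivation_sum[OF D1] derivation_sum[OF D2])
  then show ?thesis
    by auto
qed

lemma dU_eq_lin_ext: "dU u = lin_ext (dU_mon u)"
  unfolding dU_def
proof (rule the_equality)
  have "is_derivation (lin_ext (dU_mon u))"
    by (rule is_derivation_lin_ext[OF dU_mon_leibniz])
  then show "is_derivation (lin_ext (dU_mon u)) \<and> lin_ext (dU_mon u) E4 = - cst (1/3) * (E6 - E4 * F2)
    \<and> lin_ext (dU_mon u) E6 = - cst (1/2) * (E4\<^sup>2 - E6 * F2)
    \<and> lin_ext (dU_mon u) F2 = - cst (1/12) * (E4 - F2\<^sup>2) \<and> lin_ext (dU_mon u) A = cst u * B"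
    by (simp add: lin_ext_dU_mon_generators dE4_def dE6_def dF2_def dA_def)
next
  fix D
  assume "is_derivation D \<and> D E4 = - cst (1/3) * (E6 - E4 * F2)
    \<and> D E6 = - cst (1/2) * (E4\<^sup>2 - E6 * F2)
    \<and> D F2 = - cst (1/12) * (E4 - F2\<^sup>2) \<and> D A = cst u * B"
  then show "D = lin_ext (dU_mon u)"
    by (intro derivation_eqI is_derivation_lin_ext dU_mon_leibniz)
      (simp_all add: lin_ext_dU_mon_generators dE4_def dE6_def dF2_def dA_def)
qed

lemma is_derivation_dU: "is_derivation (dU u)"
  by (simp add: dU_eq_lin_ext is_derivation_lin_ext dU_mon_leibniz)

lemma dU_generators: "dU u E4 = dE4" "dU u E6 = dE6" "dU u F2 = dF2" "dU u A = dA u"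
  by (simp_all add: dU_eq_lin_ext lin_ext_dU_mon_generators)

lemma dU_add: "dU u (f + g) = dU u f + dU u g"
  and dU_mult: "dU u (f * g) = f * dU u g + g * dU u f"
  and dU_cst: "dU u (cst c) = 0"
  by (simp_all add: derivation_add derivation_mult derivation_cst is_derivation_dU)

lemma dU_diff: "dU u (f - g) = dU u f - dU u g"
  using dU_add[of u "f - g" g] by (simp add: eq_diff_eq)

lemma dU_zero: "dU u 0 = 0"
  using dU_cst[of u 0] by simp

lemma dU_funpow_zero: "(dU u ^^ r) 0 = 0"
  by (induction r) (simp_all add: dU_zero)

lemma wt_add: "wt (m + n) = wt m + wt n"
  and ind_add: "ind (m + n) = ind m + ind n"
  by (cases m rule: prod_cases4; cases n rule: prod_cases4; simp add: wt_def ind_def)+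

lemma mon_Kc: "mon m \<in> Kc (wt m) (ind m)"
  by (simp add: Kc_def mon_def)

lemma Kc_mult:
  assumes "f \<in> Kc k p" "g \<in> Kc l q"
  shows "f * g \<in> Kc (k + l) (p + q)"
  unfolding Kc_def
proof (intro CollectI ballI)
  fix m
  assume "m \<in> supp (f * g)"
  then obtain a b where "m = a + b" "a \<in> supp f" "b \<in> supp g"
    using keys_mult[of f g] by auto
  then show "wt m = k + l \<and> ind m = p + q"
    using assms unfolding Kc_def by (simp add: wt_add ind_add)
qed

lemma Kc_cst: "cst c \<in> Kc 0 0"
  by (simp add: Kc_def cst_def wt_def ind_def zero_mono)

lemma degs_Kc:
  assumes "f \<in> Kc k p" "f \<noteq> 0"
  shows "degs f = {(k, p)}"
proof -
  obtain m where "m \<in> supp f"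
    using assms(2) keys_eq_empty by blast
  then show ?thesis
    using assms(1) unfolding degs_def Kc_def by force
qed

lemma hcomp_Kc:
  assumes "f \<in> Kc k p"
  shows "hcomp k p f = f"
proof -
  have "{m \<in> supp f. wt m = k \<and> ind m = p} = supp f"
    using assms unfolding Kc_def by auto
  then show ?thesis
    unfolding hcomp_def by (simp flip: poly_mapping_sum_singles)
qed

lemma br_Kc:
  assumes "f \<in> Kc k p" "g \<in> Kc l q"
  shows "br u v n f g = brh u v n k p l q f g"
proof (cases "f = 0 \<or> g = 0")
  case True
  then show ?thesis
    by (auto simp: br_def brh_def degs_def dU_funpow_zero)
next
  case False
  then show ?thesis
    using assms by (simp add: br_def degs_Kc hcomp_Kc)
qed

lemma brh_0: "brh u v 0 k p l q f g = f * g"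
  by (simp add: brh_def)

lemma brh_1: "brh u v 1 k p l q f g =
   cst (of_int k + v * of_int p) * f * dU u g - cst (of_int l + v * of_int q) * dU u f * g"
  using cst_uminus[of "of_int l + v * of_int q"] by (simp add: brh_def)

lemma Kc_eq_sum:
  assumes "finite S" "\<And>m. wt m = k \<Longrightarrow> ind m = p \<Longrightarrow> m \<in> S" "f \<in> Kc k p"
  shows "f = (\<Sum>m\<in>S. cst (coeff f m) * mon m)"
proof -
  have "supp f \<subseteq> S"
    using assms(2,3) unfolding Kc_def by blast
  then have "(\<Sum>m\<in>supp f. cst (coeff f m) * mon m)
           = (\<Sum>m\<in>S. cst (coeff f m) * mon m)"
    by (intro sum.mono_neutral_left assms(1)) (auto simp: in_keys_iff)
  then show ?thesis
    by (simp flip: K_sum_monomials)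
qed

lemma monomial_degree_equation:
  assumes "wt m = 2 * int N - 2 * p" "ind m = p"
  shows "\<exists>a b d. m = (a, b, p - int d, d) \<and> 2 * a + 3 * b + d = N"
  using assms by (cases m rule: prod_cases4) (auto simp: wt_def ind_def)

lemma monomials_of_degree:
  "wt m = 0 \<Longrightarrow> ind m = 0 \<Longrightarrow> m \<in> {(0,0,0,0)}"
  "wt m = 2 \<Longrightarrow> ind m = 0 \<Longrightarrow> m \<in> {(0,0,-1,1)}"
  "wt m = -2 \<Longrightarrow> ind m = 1 \<Longrightarrow> m \<in> {(0,0,1,0)}"
  "wt m = 4 \<Longrightarrow> ind m = 0 \<Longrightarrow> m \<in> {(1,0,0,0), (0,0,-2,2)}"
  "wt m = 6 \<Longrightarrow> ind m = 0 \<Longrightarrow> m \<in> {(0,1,0,0), (1,0,-1,1), (0,0,-3,3)}"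
  using monomial_degree_equation[of m 0 0] monomial_degree_equation[of m 1 0]
    monomial_degree_equation[of m 0 1] monomial_degree_equation[of m 2 0]
    monomial_degree_equation[of m 3 0]
  by - (auto; presburger)+

lemma Kc_A: "A \<in> Kc (-2) 1"
  and Kc_F2: "F2 \<in> Kc 2 0"
  and Kc_E4: "E4 \<in> Kc 4 0"
  and Kc_E6: "E6 \<in> Kc 6 0"
  using mon_Kc[of "(0,0,1,0)"] mon_Kc[of "(0,0,-1,1)"] mon_Kc[of "(1,0,0,0)"] mon_Kc[of "(0,1,0,0)"]
  by (simp_all add: A_mon F2_mon E4_mon E6_mon wt_def ind_def)

lemma F2_power_mon: "F2 ^ n = mon (0, 0, - int n, n)"
  by (induction n) (simp_all add: F2_mon mon_mult mon_zero)

locale modular_isomorphism =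
  fixes \<phi> :: "K \<Rightarrow> K" and u v u' v' :: complex
  assumes bij: "bij \<phi>"
    and phi_add: "\<phi> (f + g) = \<phi> f + \<phi> g"
    and phi_smult: "\<phi> (cst c * f) = cst c * \<phi> f"
    and graded: "f \<in> Kc k p \<Longrightarrow> \<phi> f \<in> Kc k p"
    and bracket: "\<phi> (br u v n f g) = br u' v' n (\<phi> f) (\<phi> g)"
begin

lemma phi_inj: "\<phi> f = \<phi> g \<Longrightarrow> f = g"
  using bij by (simp add: bij_def inj_eq)

lemma phi_zero: "\<phi> 0 = 0"
  using phi_add[of 0 0] by simp

lemma phi_uminus: "\<phi> (- f) = - \<phi> f"
  using phi_smult[of "-1" f] by (simp add: cst_uminus)

lemma phi_diff: "\<phi> (f - g) = \<phi> f - \<phi> g"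
  using phi_add[of f "- g"] by (simp add: phi_uminus)

lemma phi_sum: "\<phi> (\<Sum>i\<in>S. F i) = (\<Sum>i\<in>S. \<phi> (F i))"
  by (induction S rule: infinite_finite_induct) (simp_all add: phi_zero phi_add)

lemma phi_nonzero: "f \<noteq> 0 \<Longrightarrow> \<phi> f \<noteq> 0"
  using phi_inj phi_zero by metis

text \<open>The product is the degree-0 bracket, so \<phi> is multiplicative on homogeneous elements,
  hence on all of K by bilinearity.\<close>

lemma phi_mult_Kc:
  assumes "f \<in> Kc k p" "g \<in> Kc l q"
  shows "\<phi> (f * g) = \<phi> f * \<phi> g"
  using bracket[of 0 f g] br_Kc[OF assms] br_Kc[OF graded[OF assms(1)] graded[OF assms(2)]]
  by (simp add: brh_0)

lemma phi_mult: "\<phi> (f * g) = \<phi> f * \<phi> g"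
proof -
  let ?F = "supp f" and ?G = "supp g"
  let ?f = "coeff f" and ?g = "coeff g"
  have expansion: "\<phi> h = (\<Sum>m\<in>supp h. cst (coeff h m) * \<phi> (mon m))" for h
    using arg_cong[OF K_sum_monomials[of h], of \<phi>] by (simp add: phi_sum phi_smult)
  have "f * g = (\<Sum>m\<in>?F. cst (?f m) * mon m) * (\<Sum>n\<in>?G. cst (?g n) * mon n)"
    by (simp flip: K_sum_monomials)
  also have "\<dots> = (\<Sum>m\<in>?F. \<Sum>n\<in>?G. cst (?f m * ?g n) * (mon m * mon n))"
    by (simp add: sum_product cst_mult mult_ac)
  finally have "\<phi> (f * g) = (\<Sum>m\<in>?F. \<Sum>n\<in>?G. cst (?f m * ?g n) * (\<phi> (mon m) * \<phi> (mon n)))"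
    by (simp add: phi_sum phi_smult phi_mult_Kc[OF mon_Kc mon_Kc])
  also have "\<dots> = (\<Sum>m\<in>?F. cst (?f m) * \<phi> (mon m)) * (\<Sum>n\<in>?G. cst (?g n) * \<phi> (mon n))"
    by (simp add: sum_product cst_mult mult_ac)
  also have "\<dots> = \<phi> f * \<phi> g"
    by (simp flip: expansion)
  finally show ?thesis .
qed

lemma phi_eq_sum:
  assumes "f \<in> Kc k p" "finite S" "\<And>m. wt m = k \<Longrightarrow> ind m = p \<Longrightarrow> m \<in> S"
  shows "\<phi> f = (\<Sum>m\<in>S. cst (coeff (\<phi> f) m) * mon m)"
  by (rule Kc_eq_sum[OF assms(2,3) graded[OF assms(1)]])

lemma phi_one: "\<phi> 1 = 1"
proof -
  define c where "c = coeff (\<phi> 1) (0,0,0,0)"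
  have "(1::K) \<in> Kc 0 0"
    using Kc_cst[of 1] by simp
  then have c: "\<phi> 1 = cst c"
    using phi_eq_sum[OF _ _ monomials_of_degree(1)] by (simp add: c_def mon_zero)
  have "cst c = cst (c * c)"
    using phi_mult[of 1 1] by (simp add: c cst_mult)
  moreover have "c \<noteq> 0"
    using phi_nonzero[of 1] c by auto
  ultimately show ?thesis
    using c by simp
qed

lemma phi_cst: "\<phi> (cst c) = cst c"
  using phi_smult[of c 1] phi_one by simp

lemma phi_bracket1:
  assumes "f \<in> Kc k p" "g \<in> Kc l q"
  shows "\<phi> (cst (of_int k + v * of_int p) * f * dU u g - cst (of_int l + v * of_int q) * dU u f * g)
       = cst (of_int k + v' * of_int p) * \<phi> f * dU u' (\<phi> g)
         - cst (of_int l + v' * of_int q) * dU u' (\<phi> f) * \<phi> g"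
proof -
  have "\<phi> (brh u v 1 k p l q f g) = brh u' v' 1 k p l q (\<phi> f) (\<phi> g)"
    using bracket[of 1 f g] br_Kc[OF assms] br_Kc[OF graded[OF assms(1)] graded[OF assms(2)]]
    by simp
  then show ?thesis
    unfolding brh_1 .
qed

definition "\<alpha> = coeff (\<phi> A) (0,0,1,0)"
definition "\<rho> = coeff (\<phi> F2) (0,0,-1,1)"
definition "\<gamma> = coeff (\<phi> E4) (1,0,0,0)"
definition "\<delta> = coeff (\<phi> E4) (0,0,-2,2)"
definition "\<epsilon> = coeff (\<phi> E6) (0,1,0,0)"
definition "\<zeta> = coeff (\<phi> E6) (1,0,-1,1)"
definition "\<eta> = coeff (\<phi> E6) (0,0,-3,3)"

lemma phi_A: "\<phi> A = cst \<alpha> * A"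
proof -
  have "\<phi> A = (\<Sum>m\<in>{(0,0,1,0)}. cst (coeff (\<phi> A) m) * mon m)"
    by (rule phi_eq_sum[OF Kc_A _ monomials_of_degree(3)]) simp
  also have "\<dots> = cst \<alpha> * A"
    by (simp add: \<alpha>_def A_mon)
  finally show ?thesis .
qed

lemma phi_F2: "\<phi> F2 = cst \<rho> * F2"
proof -
  have "\<phi> F2 = (\<Sum>m\<in>{(0,0,-1,1)}. cst (coeff (\<phi> F2) m) * mon m)"
    by (rule phi_eq_sum[OF Kc_F2 _ monomials_of_degree(2)]) simp
  also have "\<dots> = cst \<rho> * F2"
    by (simp add: \<rho>_def F2_mon)
  finally show ?thesis .
qed

lemma phi_E4: "\<phi> E4 = cst \<gamma> * E4 + cst \<delta> * F2 ^ 2"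
proof -
  have "\<phi> E4 = (\<Sum>m\<in>{(1,0,0,0), (0,0,-2,2)}. cst (coeff (\<phi> E4) m) * mon m)"
    by (rule phi_eq_sum[OF Kc_E4 _ monomials_of_degree(4)]) simp
  also have "\<dots> = cst \<gamma> * E4 + cst \<delta> * F2 ^ 2"
    by (simp add: \<gamma>_def \<delta>_def E4_mon F2_power_mon)
  finally show ?thesis .
qed

lemma phi_E6: "\<phi> E6 = cst \<epsilon> * E6 + cst \<zeta> * E4 * F2 + cst \<eta> * F2 ^ 3"
proof -
  have "\<phi> E6 = (\<Sum>m\<in>{(0,1,0,0), (1,0,-1,1), (0,0,-3,3)}. cst (coeff (\<phi> E6) m) * mon m)"
    by (rule phi_eq_sum[OF Kc_E6 _ monomials_of_degree(5)]) simp
  also have "\<dots> = cst \<epsilon> * E6 + cst \<zeta> * E4 * F2 + cst \<eta> * F2 ^ 3"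
    by (simp add: \<epsilon>_def \<zeta>_def \<eta>_def E4_mon E6_mon F2_mon power3_eq_cube mon_mult
        mult.assoc add.assoc numeral_3_eq_3)
  finally show ?thesis .
qed

lemma phi_B: "\<phi> B = cst (\<rho> * \<alpha>) * B"
  by (simp add: B_eq_F2_mult_A phi_mult phi_F2 phi_A cst_mult mult_ac)

lemma phi_numeral: "\<phi> (numeral k) = numeral k"
  using phi_cst[of "numeral k"] by simp

lemmas phi_simps = phi_add phi_diff phi_uminus phi_mult phi_cst phi_numeral
  phi_A phi_B phi_F2 phi_E4 phi_E6
lemmas dU_expand_simps = dU_add dU_diff dU_mult dU_cst dU_generators dE4_def dE6_def dF2_def dA_def
  ring_distribs power2_eq_square power3_eq_cube
lemmas coefficient_simps = E4_mon E6_mon F2_mon A_mon B_mon mon_def cst_def mult_single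
  numeral_mult_single single_mult_numeral single_uminus lookup_add lookup_minus lookup_single when_def
  mult.assoc[symmetric]

lemma lookup_phi_bracket1:
  assumes "f \<in> Kc k p" "g \<in> Kc l q"
  shows "coeff (\<phi> (cst (of_int k + v * of_int p) * f * dU u g
                       - cst (of_int l + v * of_int q) * dU u f * g)) m
       = coeff (cst (of_int k + v' * of_int p) * \<phi> f * dU u' (\<phi> g)
         - cst (of_int l + v' * of_int q) * dU u' (\<phi> f) * \<phi> g) m"
  using phi_bracket1[OF assms] by simp

lemma rho_nonzero: "\<rho> \<noteq> 0"
  using phi_nonzero[OF mon_nonzero[of "(0,0,-1,1)", folded F2_mon]] by (auto simp: phi_F2)

lemma alpha_nonzero: "\<alpha> \<noteq> 0"
  using phi_nonzero[OF mon_nonzero[of "(0,0,1,0)", folded A_mon]] by (auto simp: phi_A)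

lemmas coeff_bracket_F2_E4 =
  lookup_phi_bracket1[OF Kc_F2 Kc_E4, simplified phi_simps dU_expand_simps]
lemmas coeff_bracket_F2_E6 =
  lookup_phi_bracket1[OF Kc_F2 Kc_E6, simplified phi_simps dU_expand_simps]
lemmas coeff_bracket_F2_A =
  lookup_phi_bracket1[OF Kc_F2 Kc_A, simplified phi_simps dU_expand_simps]
lemmas coeff_bracket_A_E4 =
  lookup_phi_bracket1[OF Kc_A Kc_E4, simplified phi_simps dU_expand_simps]

lemma coefficient_equations:
  shows "\<gamma> = 0 \<or> \<gamma> = \<rho>"
    and "\<rho> = 0 \<or> \<epsilon> = \<gamma>"
    and "\<gamma> * \<rho> * \<rho> + (2 * \<delta> * \<gamma> - 2 * \<rho> * \<zeta>) = \<gamma> * \<rho>"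
    and "\<gamma> * \<zeta> / 2 - \<rho> * \<gamma> * \<gamma> = \<rho> * \<zeta> / 3 - \<rho> * \<epsilon>"
    and "\<epsilon> * \<rho> * \<rho> / 2 + \<delta> * \<epsilon> / 2 = \<epsilon> * \<rho> / 2 - 2 * \<rho> * \<zeta> / 3"
    and "(v - 2) * \<gamma> = (v' - 2) * \<rho>"
    and "(v - 2) * \<alpha> * \<gamma> * \<rho> / 3 - (v - 2) * \<alpha> * \<zeta> / 3 - 4 * u * \<rho> * \<alpha> * \<gamma>
       = (v' - 2) * \<alpha> * \<gamma> / 3 - (v' - 2) * \<alpha> * \<delta> / 6 - 4 * \<alpha> * u' * \<gamma>"
proof goal_cases
  case 1
  show ?case using coeff_bracket_F2_E4[of "(2,0,0,0)"] by (simp add: coefficient_simps)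
next
  case 2
  show ?case using coeff_bracket_F2_E4[of "(0,1,-1,1)"] by (simp add: coefficient_simps)
next
  case 3
  show ?case using coeff_bracket_F2_E4[of "(1,0,-2,2)"] by (simp add: coefficient_simps)
next
  case 4
  show ?case using coeff_bracket_F2_E6[of "(2,0,-1,1)"] by (simp add: coefficient_simps)
next
  case 5
  show ?case using coeff_bracket_F2_E6[of "(0,1,-2,2)"] by (simp add: coefficient_simps)
next
  case 6
  have "\<alpha> = 0 \<or> ?case"
    using coeff_bracket_F2_A[of "(1,0,1,0)"] by (simp add: coefficient_simps)
  then show ?case
    using alpha_nonzero by simp
next
  case 7
  show ?case using coeff_bracket_A_E4[of "(1,0,0,1)"] by (simp add: coefficient_simps)
qed

lemma gamma_nonzero: "\<gamma> \<noteq> 0"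
proof
  assume "\<gamma> = 0"
  have "\<phi> (cst (\<delta> / \<rho>^2) * F2^2) = cst (\<delta> / \<rho>^2) * (cst \<rho> * F2)^2"
    by (simp add: phi_cst phi_mult phi_F2 power2_eq_square)
  also have "\<dots> = cst (\<delta> / \<rho>^2 * \<rho>^2) * F2^2"
    by (simp only: power_mult_distrib cst_power cst_mult mult.assoc)
  also have "\<dots> = cst \<delta> * F2^2"
    using rho_nonzero by simp
  also have "\<dots> = \<phi> E4"
    using \<open>\<gamma> = 0\<close> by (simp add: phi_E4)
  finally have "E4 = cst (\<delta> / \<rho>^2) * F2^2"
    by (rule phi_inj[symmetric])
  then have "coeff E4 (1,0,0,0) = coeff (cst (\<delta> / \<rho>^2) * F2^2) (1,0,0,0)"
    by simp
  then show False
    by (simp add: E4_mon F2_power_mon mon_def cst_mult_single lookup_single)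
qed

lemma coefficients_trivial: "\<gamma> = 1 \<and> \<rho> = 1 \<and> \<delta> = 0 \<and> \<zeta> = 0"
proof -
  note eq = coefficient_equations
  have \<gamma>: "\<gamma> = \<rho>" and \<epsilon>: "\<epsilon> = \<rho>"
    using eq(1,2) gamma_nonzero rho_nonzero by auto
  have c1: "\<rho> * \<rho> + 2 * \<delta> - 2 * \<zeta> = \<rho>"
  proof -
    have "\<rho> * (\<rho> * \<rho> + 2 * \<delta> - 2 * \<zeta>) = \<rho> * \<rho>"
      using eq(3) unfolding \<gamma> by (simp add: algebra_simps)
    then show ?thesis
      using rho_nonzero by simp
  qed
  have c2: "\<zeta> = 6 * (\<rho> * \<rho> - \<rho>)"
  proof -
    have "\<rho> * (\<zeta> / 2 - \<rho> * \<rho>) = \<rho> * (\<zeta> / 3 - \<rho>)"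
      using eq(4) unfolding \<gamma> \<epsilon> by (simp add: algebra_simps)
    then have "\<zeta> / 2 - \<rho> * \<rho> = \<zeta> / 3 - \<rho>"
      using rho_nonzero by simp
    then show ?thesis
      by (simp add: field_simps)
  qed
  have c3: "\<rho> * \<rho> + \<delta> = \<rho> - 4 * \<zeta> / 3"
  proof -
    have "\<rho> * (\<rho> * \<rho> + \<delta>) = \<rho> * (\<rho> - 4 * \<zeta> / 3)"
      using eq(5) unfolding \<epsilon> by (simp add: algebra_simps)
    then show ?thesis
      using rho_nonzero by simp
  qed
  have \<delta>: "\<delta> = \<zeta> - (\<rho> * \<rho> - \<rho>) / 2"
    using c1 by (simp add: field_simps)
  have "29 * (\<rho> * \<rho> - \<rho>) = 0"
    using c3 unfolding \<delta> c2 by (simp add: field_simps)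
  then have "\<rho> = 1"
    using rho_nonzero by (simp add: right_diff_distrib)
  then show ?thesis
    using \<gamma> c1 c2 by simp
qed

lemma parameters_eq: "u = u' \<and> v = v'"
proof -
  note eq = coefficient_equations(6,7)[unfolded coefficients_trivial[THEN conjunct1]
      coefficients_trivial[THEN conjunct2, THEN conjunct1]]
  have "v = v'"
    using eq(1) alpha_nonzero by simp
  moreover have "u = u'"
    using eq(2) alpha_nonzero coefficients_trivial unfolding \<open>v = v'\<close> by simp
  ultimately show ?thesis
    by simp
qed

end

theorem mainTheorem13:
  fixes u v u' v' :: complex
  shows "modular_iso (br u v) (br u' v') \<longleftrightarrow> (u, v) = (u', v')"
proof
  assume "modular_iso (br u v) (br u' v')"
  then obtain \<phi> where "modular_isomorphism \<phi> u v u' v'"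
    unfolding modular_iso_def modular_isomorphism_def by blast
  then show "(u, v) = (u', v')"
    using modular_isomorphism.parameters_eq by blast
next
  assume "(u, v) = (u', v')"
  then show "modular_iso (br u v) (br u' v')"
    unfolding modular_iso_def by (intro exI[of _ id]) auto
qed

end
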